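(* Let $m\geq 1$, let $\Gamma=C_{4m}=\langle\gamma\rangle$ be the cyclic group of order $4m$, and let $\sigma=\gamma^{2m}$. Then there is no centrally symmetric convex $3$-polytope $P$ in $\mathbb{E}^3$ such that $\Gamma(P)=\Gamma$ and $\sigma$ is realized as the central symmetry of $P$ (i.e., there is no isomorphism $\Gamma\to\Gamma(P)$ sending $\sigma$ to the automorphism induced by $x\mapsto -x$).
   Context: For a convex polytope $P$, $\Gamma(P)$ is the group of combinatorial automorphisms of its face lattice. $P$ is centrally symmetric if $-P=P$ (with respect to the origin), so $x\mapsto -x$ induces an automorphism of $P$. *)

theory Defs
  imports "HOL-Analysis.Analysis" "HOL-Algebra.Elementary_Groups" "HOL-Algebra.Bij"
begin

definition faces :: "'a::real_normed_vector set \<Rightarrow> 'a set set" where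
  "faces P = {F. F face_of P}"

text \<open>Combinatorial automorphisms: bijections of the face set preserving and reflecting inclusion
(i.e. lattice automorphisms), taken extensional on the face set.\<close>
definition comb_auts :: "'a::real_normed_vector set \<Rightarrow> ('a set \<Rightarrow> 'a set) set" where
  "comb_auts P = {f \<in> Bij (faces P).
      \<forall>F\<in>faces P. \<forall>G\<in>faces P. (F \<subseteq> G \<longleftrightarrow> f F \<subseteq> f G)}"

definition comb_aut_group :: "'a::real_normed_vector set \<Rightarrow> ('a set \<Rightarrow> 'a set) monoid" where
  "comb_aut_group P = (BijGroup (faces P)) \<lparr>carrier := comb_auts P\<rparr>"

definition antipodal_aut :: "'a::real_normed_vector set \<Rightarrow> ('a set \<Rightarrow> 'a set)" where
  "antipodal_aut P = (\<lambda>F\<in>faces P. uminus ` F)"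

end

theory Submission
  imports Defs "HOL-Homology.Homology"
begin

(* Let tau = h m; then tau o tau is the central symmetry on faces. Sending each vertex v to the
   vertex tau {v} and extending barycentrically gives a continuous map g of P with g x in tau F
   whenever x lies in the face F, so g (g x) lies in -F. A proper face never contains both x and
   -x, as their midpoint 0 is an interior point; hence g maps the boundary of P, a 2-sphere, to
   itself without points of period one or two. This is impossible on an even-dimensional sphere:
   g o g would be fixpoint-free, hence homotopic to the antipodal map of degree -1, whereas
   deg (g o g) = (deg g)^2. *)

section \<open>Degrees of self-maps of spheres\<close>

lemma continuous_map_nsphere_permute:
  assumes "p permutes {..n}"
  shows "continuous_map (nsphere n) (nsphere n) (\<lambda>x. x \<circ> p)"
proof -
  have "(\<Sum>i\<le>n. (x (p i))\<^sup>2) = (\<Sum>i\<le>n. (x i)\<^sup>2)" for x :: "nat \<Rightarrow> real"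
    using sum.permute[OF assms, of "\<lambda>i. (x i)\<^sup>2"] by (simp add: o_def)
  moreover have "p i = i" if "i > n" for i
    using assms that by (auto simp: permutes_not_in)
  moreover have "continuous_map (powertop_real UNIV) (powertop_real UNIV) (\<lambda>x. x \<circ> p)"
    unfolding continuous_map_componentwise_UNIV o_def
    by (auto intro: continuous_map_product_projection)
  ultimately show ?thesis
    unfolding nsphere continuous_map_in_subtopology
    by (auto intro: continuous_map_from_subtopology)
qed

lemma continuous_map_nsphere_negate_on:
  "continuous_map (nsphere n) (nsphere n) (\<lambda>x i. if i \<in> A then - x i else x i)"
proof -
  have "(\<Sum>i\<le>n. (if i \<in> A then - x i else x i)\<^sup>2) = (\<Sum>i\<le>n. (x i)\<^sup>2)" for x :: "nat \<Rightarrow> real"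
    by (intro sum.cong) auto
  moreover have "continuous_map (powertop_real UNIV) (powertop_real UNIV)
      (\<lambda>x i. if i \<in> A then - x i else x i)"
    unfolding continuous_map_componentwise_UNIV
    by (auto intro: continuous_map_product_projection continuous_map_minus)
  ultimately show ?thesis
    unfolding nsphere continuous_map_in_subtopology
    by (auto intro: continuous_map_from_subtopology)
qed

text \<open>Conjugate the reflection in coordinate 0 by the transposition of 0 and \<open>k\<close>.\<close>
lemma Brouwer_degree2_reflection_at:
  assumes "k \<le> n"
  shows "Brouwer_degree2 n (\<lambda>x i. if i = k then - x i else x i) = -1"
proof -
  define s where "s = (\<lambda>x::nat \<Rightarrow> real. x \<circ> Transposition.transpose 0 k)"
  define r where "r = (\<lambda>(x::nat \<Rightarrow> real) i. if i = 0 then - x i else x i)"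
  have s: "continuous_map (nsphere n) (nsphere n) s"
    unfolding s_def using assms by (intro continuous_map_nsphere_permute permutes_swap_id) auto
  have r: "continuous_map (nsphere n) (nsphere n) r"
    unfolding r_def by (rule continuous_map_nsphere_reflection)
  have "s \<circ> s = id"
    by (auto simp: s_def fun_eq_iff)
  then have "Brouwer_degree2 n s * Brouwer_degree2 n s = 1"
    using Brouwer_degree2_compose[OF s s] by simp
  moreover have "(\<lambda>x i. if i = k then - x i else x i) = s \<circ> r \<circ> s"
    by (auto simp: s_def r_def fun_eq_iff Transposition.transpose_def)
  moreover have "Brouwer_degree2 n r = -1"
    unfolding r_def by (rule Brouwer_degree2_reflection)
  ultimately show ?thesis
    using Brouwer_degree2_compose[OF s continuous_map_compose[OF r s]]
      Brouwer_degree2_compose[OF r s] by (simp add: o_assoc)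
qed

lemma Brouwer_degree2_negate_lessThan:
  "m \<le> Suc n \<Longrightarrow> Brouwer_degree2 n (\<lambda>x i. if i < m then - x i else x i) = (-1) ^ m"
proof (induction m)
  case 0
  then show ?case
    by (simp flip: id_def)
next
  case (Suc m)
  have split: "(\<lambda>x i. if i < Suc m then - x i else x i) =
        (\<lambda>x i. if i = m then - x i else x i) \<circ> (\<lambda>x i. if i \<in> {..<m} then - x i else x i)"
    by (auto simp: fun_eq_iff)
  have "Brouwer_degree2 n (\<lambda>x i. if i < Suc m then - x i else x i) =
      Brouwer_degree2 n (\<lambda>x i. if i = m then - x i else x i) *
      Brouwer_degree2 n (\<lambda>x i. if i \<in> {..<m} then - x i else x i)"
    unfolding split
    by (rule Brouwer_degree2_compose[OF continuous_map_nsphere_negate_on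
          continuous_map_nsphere_reflection])
  with Suc show ?case
    using Brouwer_degree2_reflection_at[of m n] by simp
qed

lemma Brouwer_degree2_antipodal: "Brouwer_degree2 n (\<lambda>x i. - x i) = (-1) ^ Suc n"
proof -
  have "Brouwer_degree2 n (\<lambda>x i. - x i) = Brouwer_degree2 n (\<lambda>x i. if i < Suc n then - x i else x i)"
    by (rule Brouwer_degree2_eq) (auto simp: nsphere fun_eq_iff)
  then show ?thesis
    by (simp add: Brouwer_degree2_negate_lessThan)
qed

lemma continuous_map_nsphere_normalize:
  assumes cont: "\<And>i. continuous_map X euclideanreal (\<lambda>x. h x i)"
    and nonzero: "\<And>x. x \<in> topspace X \<Longrightarrow> \<exists>i\<le>n. h x i \<noteq> 0"
    and vanish: "\<And>x i. x \<in> topspace X \<Longrightarrow> i > n \<Longrightarrow> h x i = 0"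
  shows "continuous_map X (nsphere n) (\<lambda>x i. h x i / sqrt (\<Sum>j\<le>n. (h x j)\<^sup>2))"
proof -
  have pos: "(\<Sum>j\<le>n. (h x j)\<^sup>2) > 0" if "x \<in> topspace X" for x
    using nonzero[OF that] by (auto intro: sum_pos2)
  have "continuous_map X euclideanreal (\<lambda>x. h x i / sqrt (\<Sum>j\<le>n. (h x j)\<^sup>2))" for i
    by (intro continuous_intros cont) (auto dest!: pos)
  moreover have "(\<Sum>i\<le>n. (h x i / sqrt (\<Sum>j\<le>n. (h x j)\<^sup>2))\<^sup>2) = 1" if "x \<in> topspace X" for x
    using pos[OF that] by (simp add: power_divide flip: sum_divide_distrib)
  ultimately show ?thesis
    unfolding nsphere continuous_map_in_subtopology continuous_map_componentwise_UNIV
    using vanish by auto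
qed

lemma topspace_nsphereD:
  assumes "x \<in> topspace (nsphere n)"
  shows "(\<Sum>i\<le>n. (x i)\<^sup>2) = 1" and "\<And>i. i > n \<Longrightarrow> x i = 0"
  using assms by (auto simp: nsphere)

lemma homotopic_non_antipodal_nsphere:
  assumes f: "continuous_map X (nsphere n) f" and g: "continuous_map X (nsphere n) g"
    and non_antipodal: "\<And>x. x \<in> topspace X \<Longrightarrow> g x \<noteq> (\<lambda>i. - f x i)"
  shows "homotopic_with (\<lambda>h. True) X (nsphere n) f g"
proof -
  let ?T = "prod_topology (top_of_set {0..1::real}) X"
  define h where "h = (\<lambda>(t, x) i. (1 - t) * f x i + t * g x i)"
  have fx: "f x \<in> topspace (nsphere n)" and gx: "g x \<in> topspace (nsphere n)"
    if "x \<in> topspace X" for x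
    using that f g by (auto simp: continuous_map_def)
  have "continuous_map ?T (nsphere n) (\<lambda>p i. h p i / sqrt (\<Sum>j\<le>n. (h p j)\<^sup>2))"
  proof (rule continuous_map_nsphere_normalize)
    have "continuous_map ?T euclideanreal fst"
      by (metis continuous_map_fst continuous_map_into_fulltopology)
    moreover have "continuous_map ?T euclideanreal (\<lambda>p. k (snd p) i)"
      if "continuous_map X (nsphere n) k" for k i
      using continuous_map_compose[OF continuous_map_compose[OF continuous_map_snd that]
          continuous_map_nsphere_projection]
      by (simp add: o_def)
    ultimately show "continuous_map ?T euclideanreal (\<lambda>p. h p i)" for i
      unfolding h_def case_prod_unfold using f g by (intro continuous_intros) auto
  next
    fix p assume "p \<in> topspace ?T"
    then obtain t x where p: "p = (t, x)" and t: "t \<in> {0..1}" and x: "x \<in> topspace X"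
      by auto
    show "h p i = 0" if "i > n" for i
      using topspace_nsphereD(2)[OF fx[OF x] that] topspace_nsphereD(2)[OF gx[OF x] that]
      by (simp add: h_def p)
    show "\<exists>i\<le>n. h p i \<noteq> 0"
    proof (rule ccontr)
      assume "\<not> (\<exists>i\<le>n. h p i \<noteq> 0)"
      then have cancel: "(1 - t) * f x i = - (t * g x i)" if "i \<le> n" for i
        using that by (auto simp: h_def p add_eq_0_iff)
      have "(1 - t)\<^sup>2 = (\<Sum>i\<le>n. ((1 - t) * f x i)\<^sup>2)"
        using topspace_nsphereD(1)[OF fx[OF x]]
        by (simp add: power_mult_distrib flip: sum_distrib_left)
      also have "\<dots> = (\<Sum>i\<le>n. (t * g x i)\<^sup>2)"
        using cancel by (intro sum.cong) auto
      also have "\<dots> = t\<^sup>2"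
        using topspace_nsphereD(1)[OF gx[OF x]]
        by (simp add: power_mult_distrib flip: sum_distrib_left)
      finally have "t = 1 / 2"
        using t by (simp add: power2_eq_iff)
      then have "g x i = - f x i" for i
        using cancel[of i] topspace_nsphereD(2)[OF fx[OF x], of i]
          topspace_nsphereD(2)[OF gx[OF x], of i]
        by (cases "i \<le> n") (simp_all add: \<open>t = 1 / 2\<close>)
      then show False
        using non_antipodal[OF x] by auto
    qed
  qed
  then have "homotopic_with (\<lambda>h. True) X (nsphere n)
      (\<lambda>x i. h (0, x) i / sqrt (\<Sum>j\<le>n. (h (0, x) j)\<^sup>2))
      (\<lambda>x i. h (1, x) i / sqrt (\<Sum>j\<le>n. (h (1, x) j)\<^sup>2))"
    unfolding homotopic_with_def
    by (intro exI[where x = "\<lambda>p i. h p i / sqrt (\<Sum>j\<le>n. (h p j)\<^sup>2)"]) auto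
  then show ?thesis
    by (rule homotopic_with_eq)
      (auto simp: h_def topspace_nsphereD(1)[OF fx] topspace_nsphereD(1)[OF gx])
qed

lemma Brouwer_degree2_fixpoint_free:
  assumes f: "continuous_map (nsphere n) (nsphere n) f"
    and fixpoint_free: "\<And>x. x \<in> topspace (nsphere n) \<Longrightarrow> f x \<noteq> x"
  shows "Brouwer_degree2 n f = (-1) ^ Suc n"
proof -
  have "(\<lambda>i. - x i) \<noteq> (\<lambda>i. - f x i)" if "x \<in> topspace (nsphere n)" for x
  proof
    assume "(\<lambda>i. - x i) = (\<lambda>i. - f x i)"
    then have "f x = x"
      by (simp add: fun_eq_iff)
    with fixpoint_free[OF that] show False ..
  qed
  then have "homotopic_with (\<lambda>h. True) (nsphere n) (nsphere n) f (\<lambda>x i. - x i)"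
    using continuous_map_nsphere_negate_on[where A = UNIV]
    by (intro homotopic_non_antipodal_nsphere f) auto
  then show ?thesis
    by (simp add: Brouwer_degree2_homotopic Brouwer_degree2_antipodal)
qed

text \<open>The degree of \<open>f \<circ> f\<close> is a square, hence not the degree \<open>-1\<close> of a fixpoint-free
  map.\<close>
lemma even_nsphere_map_square_fixpoint:
  assumes "even n" and f: "continuous_map (nsphere n) (nsphere n) f"
  obtains x where "x \<in> topspace (nsphere n)" and "f (f x) = x"
proof (rule ccontr)
  assume "\<not> thesis"
  with that have "Brouwer_degree2 n (f \<circ> f) = -1"
    using assms by (subst Brouwer_degree2_fixpoint_free) (auto intro: continuous_map_compose)
  moreover have "Brouwer_degree2 n (f \<circ> f) \<ge> 0"
    by (simp add: Brouwer_degree2_compose[OF f f])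
  ultimately show False
    by simp
qed

lemma homeomorphic_sphere_square_fixpoint:
  fixes S :: "'a::euclidean_space set"
  assumes "S homeomorphic sphere (0::'a) 1" and "odd DIM('a)"
    and f: "continuous_on S f" "f ` S \<subseteq> S"
  obtains x where "x \<in> S" and "f (f x) = x"
proof -
  obtain \<phi>0 \<psi>0 where "homeomorphic_maps (nsphere (DIM('a) - 1))
      (top_of_set (sphere (0::'a) 1 \<inter> span Basis)) \<phi>0 \<psi>0"
    using homeomorphic_maps_nsphere_euclidean_sphere[of "Basis :: 'a set" "DIM('a)"]
      independent_Basis orthogonal_Basis by auto
  then have sphere:
      "homeomorphic_maps (nsphere (DIM('a) - 1)) (top_of_set (sphere (0::'a) 1)) \<phi>0 \<psi>0"
    by simp
  obtain a b where "homeomorphism S (sphere (0::'a) 1) a b"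
    using assms(1) by (auto simp: homeomorphic_def)
  then have "homeomorphic_maps (top_of_set (sphere (0::'a) 1)) (top_of_set S) b a"
    by (simp add: homeomorphism_symD)
  then have "homeomorphic_maps (nsphere (DIM('a) - 1)) (top_of_set S) (b \<circ> \<phi>0) (\<psi>0 \<circ> a)"
    using homeomorphic_maps_compose sphere by blast
  then obtain \<phi> \<psi> where \<phi>: "continuous_map (nsphere (DIM('a) - 1)) (top_of_set S) \<phi>"
    and \<psi>: "continuous_map (top_of_set S) (nsphere (DIM('a) - 1)) \<psi>"
    and \<phi>\<psi>: "\<And>z. z \<in> S \<Longrightarrow> \<phi> (\<psi> z) = z"
    by (auto simp: homeomorphic_maps_def)
  have "continuous_map (top_of_set S) (top_of_set S) f"
    using f by (auto simp: continuous_map_subtopology_eu)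
  then have "continuous_map (nsphere (DIM('a) - 1)) (nsphere (DIM('a) - 1)) (\<psi> \<circ> f \<circ> \<phi>)"
    using continuous_map_compose[OF \<phi> continuous_map_compose[OF _ \<psi>]] by blast
  moreover have "even (DIM('a) - 1)"
    using assms(2) by simp
  ultimately obtain y where y: "y \<in> topspace (nsphere (DIM('a) - 1))"
    and "(\<psi> \<circ> f \<circ> \<phi>) ((\<psi> \<circ> f \<circ> \<phi>) y) = y"
    using even_nsphere_map_square_fixpoint[of "DIM('a) - 1" "\<psi> \<circ> f \<circ> \<phi>"] by blast
  moreover have "\<phi> y \<in> S"
    using \<phi> y by (auto simp: continuous_map_def)
  ultimately have "\<psi> (f (f (\<phi> y))) = y"
    using f(2) \<phi>\<psi> by auto
  then have "f (f (\<phi> y)) = \<phi> y"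
    using \<phi>\<psi> f(2) \<open>\<phi> y \<in> S\<close> by (metis image_subset_iff)
  then show thesis
    using that \<open>\<phi> y \<in> S\<close> by blast
qed

section \<open>Realizing face-lattice automorphisms by continuous maps\<close>

lemma extreme_point_in_faces_containing:
  fixes P :: "'a::euclidean_space set"
  assumes "compact P" and "convex P" and "x \<in> P"
  obtains v where "v extreme_point_of P" and "\<And>F. F face_of P \<Longrightarrow> x \<in> F \<Longrightarrow> v \<in> F"
proof -
  define C where "C = \<Inter>{F. F face_of P \<and> x \<in> F}"
  have C: "C face_of P"
    unfolding C_def using assms by (intro face_of_Inter) (auto intro: face_of_refl)
  have "x \<in> C"
    by (simp add: C_def)
  then obtain v where v: "v extreme_point_of C"
    using extreme_point_exists_convex face_of_imp_compact[OF assms(2,1) C] face_of_imp_convex[OF C]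
    by blast
  then have "v \<in> C"
    by (simp add: extreme_point_of_def)
  then show thesis
    using that v extreme_point_of_face[OF C] by (auto simp: C_def)
qed

lemma polytope_vertex_partition_of_unity:
  fixes P :: "'a::euclidean_space set"
  assumes P: "polytope P"
  obtains w :: "'a \<Rightarrow> 'a \<Rightarrow> real"
  where "\<And>v. continuous_on P (w v)" and "\<And>v x. w v x \<ge> 0"
    and "\<And>x. x \<in> P \<Longrightarrow> (\<Sum>v\<in>{v. v extreme_point_of P}. w v x) = 1"
    and "\<And>v x F. F face_of P \<Longrightarrow> x \<in> F \<Longrightarrow> w v x \<noteq> 0 \<Longrightarrow> v \<in> F"
proof -
  define V where "V = {v. v extreme_point_of P}"
  define U where "U v = \<Union>{F. F face_of P \<and> v \<notin> F}" for v
  \<comment> \<open>\<open>infdist x {} = 0\<close>, so the case \<open>U v = {}\<close> needs a separate positive weight.\<close>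
  define d where "d v x = (if U v = {} then 1 else infdist x (U v))" for v x
  define S where "S x = (\<Sum>v\<in>V. d v x)" for x
  have "finite V"
    unfolding V_def using P by (simp add: finite_polyhedron_extreme_points polytope_imp_polyhedron)
  have "closed F" if "F face_of P" for F
    using that P
    by (meson compact_imp_closed face_of_imp_compact polytope_imp_compact polytope_imp_convex)
  then have U_closed: "closed (U v)" for v
    unfolding U_def
    by (intro closed_Union finite_subset[OF _ finite_polytope_faces[OF P]]) auto
  have d_cont: "continuous_on P (d v)" for v
    by (cases "U v = {}") (simp_all add: d_def continuous_on_infdist continuous_on_id)
  have d_nonneg: "d v x \<ge> 0" for v x
    by (simp add: d_def infdist_nonneg)
  have d_support: "v \<in> F" if "F face_of P" "x \<in> F" "d v x \<noteq> 0" for v x F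
  proof (rule ccontr)
    assume "v \<notin> F"
    then have "x \<in> U v"
      using that by (auto simp: U_def)
    then show False
      using that(3) by (auto simp: d_def split: if_splits)
  qed
  have S_pos: "S x > 0" if "x \<in> P" for x
  proof -
    obtain v where v: "v extreme_point_of P"
      and in_faces: "\<And>F. F face_of P \<Longrightarrow> x \<in> F \<Longrightarrow> v \<in> F"
      using extreme_point_in_faces_containing[OF polytope_imp_compact[OF P]
          polytope_imp_convex[OF P] \<open>x \<in> P\<close>] by blast
    have "x \<notin> U v"
      using in_faces by (auto simp: U_def)
    then have "U v \<noteq> {} \<Longrightarrow> infdist x (U v) \<noteq> 0"
      using in_closed_iff_infdist_zero[OF U_closed] by blast
    then have "d v x > 0"
      unfolding d_def using infdist_nonneg[of x "U v"] by (simp add: order_less_le)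
    moreover have "d v x \<le> S x"
      unfolding S_def using \<open>finite V\<close> v d_nonneg by (intro member_le_sum) (auto simp: V_def)
    ultimately show ?thesis
      by simp
  qed
  show thesis
  proof
    have "continuous_on P S"
      unfolding S_def by (intro continuous_on_sum d_cont)
    then show "continuous_on P (\<lambda>x. d v x / S x)" for v
      using S_pos by (intro continuous_on_divide d_cont) force+
    show "d v x / S x \<ge> 0" for v x
      unfolding S_def using d_nonneg by (simp add: sum_nonneg)
    show "(\<Sum>v\<in>{v. v extreme_point_of P}. d v x / S x) = 1" if "x \<in> P" for x
      using S_pos[OF that] by (simp add: S_def V_def flip: sum_divide_distrib)
    show "v \<in> F" if "F face_of P" "x \<in> F" "d v x / S x \<noteq> 0" for v x F
      using d_support that by simp
  qed
qed

lemma polytope_vertex_map_extension: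
  fixes P :: "'a::euclidean_space set" and t :: "'a \<Rightarrow> 'b::real_normed_vector"
  assumes P: "polytope P"
  obtains g where "continuous_on P g"
    and "\<And>F x. F face_of P \<Longrightarrow> x \<in> F \<Longrightarrow> g x \<in> convex hull (t ` {v. v extreme_point_of F})"
proof -
  define V where "V = {v. v extreme_point_of P}"
  obtain w :: "'a \<Rightarrow> 'a \<Rightarrow> real"
    where w_cont: "\<And>v. continuous_on P (w v)" and w_nonneg: "\<And>v x. w v x \<ge> 0"
    and w_sum: "\<And>x. x \<in> P \<Longrightarrow> (\<Sum>v\<in>V. w v x) = 1"
    and w_support: "\<And>v x F. F face_of P \<Longrightarrow> x \<in> F \<Longrightarrow> w v x \<noteq> 0 \<Longrightarrow> v \<in> F"
    using polytope_vertex_partition_of_unity[OF P] unfolding V_def by blast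
  have "finite V"
    unfolding V_def using P by (simp add: finite_polyhedron_extreme_points polytope_imp_polyhedron)
  show thesis
  proof
    show "continuous_on P (\<lambda>x. \<Sum>v\<in>V. w v x *\<^sub>R t v)"
      by (intro continuous_intros w_cont)
  next
    fix F x assume F: "F face_of P" and "x \<in> F"
    then have "x \<in> P"
      using face_of_imp_subset by blast
    have vertices_F: "V \<inter> F = {v. v extreme_point_of F}"
      using extreme_point_of_face[OF F] by (auto simp: V_def)
    have "(\<Sum>v\<in>V. w v x *\<^sub>R t v) = (\<Sum>v\<in>V \<inter> F. w v x *\<^sub>R t v)"
      using \<open>finite V\<close> w_support[OF F \<open>x \<in> F\<close>] by (intro sum.mono_neutral_right) auto
    also have "\<dots> \<in> convex hull (t ` {v. v extreme_point_of F})"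
    proof (rule convex_sum)
      have "(\<Sum>v\<in>V \<inter> F. w v x) = (\<Sum>v\<in>V. w v x)"
        using \<open>finite V\<close> w_support[OF F \<open>x \<in> F\<close>] by (intro sum.mono_neutral_left) auto
      then show "(\<Sum>v\<in>V \<inter> F. w v x) = 1"
        using w_sum[OF \<open>x \<in> P\<close>] by simp
      show "t v \<in> convex hull (t ` {v. v extreme_point_of F})" if "v \<in> V \<inter> F" for v
        using that vertices_F by (auto intro: hull_inc)
    qed (use \<open>finite V\<close> w_nonneg in auto)
    finally show "(\<Sum>v\<in>V. w v x *\<^sub>R t v) \<in> convex hull (t ` {v. v extreme_point_of F})" .
  qed
qed

lemma comb_auts_image:
  "\<tau> \<in> comb_auts P \<Longrightarrow> \<tau> ` {F. F face_of P} = {F. F face_of P}"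
  by (simp add: comb_auts_def Bij_def bij_betw_def faces_def)

lemma comb_auts_face:
  assumes "\<tau> \<in> comb_auts P" and "F face_of P"
  shows "\<tau> F face_of P"
proof -
  have "\<tau> F \<in> \<tau> ` {F. F face_of P}"
    using assms(2) by simp
  then show ?thesis
    by (simp add: comb_auts_image[OF assms(1)])
qed

lemma comb_auts_surj:
  assumes "\<tau> \<in> comb_auts P" and "G face_of P"
  obtains F where "F face_of P" and "\<tau> F = G"
proof -
  have "G \<in> \<tau> ` {F. F face_of P}"
    using assms by (simp add: comb_auts_image)
  then show thesis
    using that by auto
qed

lemma comb_auts_subset_iff:
  assumes "\<tau> \<in> comb_auts P" and "F face_of P" and "G face_of P"
  shows "\<tau> F \<subseteq> \<tau> G \<longleftrightarrow> F \<subseteq> G"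
proof -
  have "\<forall>F\<in>faces P. \<forall>G\<in>faces P. (F \<subseteq> G \<longleftrightarrow> \<tau> F \<subseteq> \<tau> G)"
    using assms(1) by (simp add: comb_auts_def)
  then show ?thesis
    using assms(2,3) by (simp add: faces_def)
qed

lemma comb_auts_eq_iff:
  assumes "\<tau> \<in> comb_auts P" and "F face_of P" and "G face_of P"
  shows "\<tau> F = \<tau> G \<longleftrightarrow> F = G"
  by (simp only: set_eq_subset comb_auts_subset_iff[OF assms] comb_auts_subset_iff[OF assms(1,3,2)])

lemma comb_auts_empty:
  assumes "\<tau> \<in> comb_auts P"
  shows "\<tau> {} = {}"
proof -
  obtain F where F: "F face_of P" and "\<tau> F = {}"
    using comb_auts_surj[OF assms empty_face_of] by blast
  have "\<tau> {} \<subseteq> \<tau> F"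
    using comb_auts_subset_iff[OF assms empty_face_of F] by simp
  with \<open>\<tau> F = {}\<close> show ?thesis
    by simp
qed

lemma comb_auts_self:
  assumes "\<tau> \<in> comb_auts P" and "convex P"
  shows "\<tau> P = P"
proof -
  have P: "P face_of P"
    using assms by (simp add: face_of_refl)
  then obtain F where F: "F face_of P" and "\<tau> F = P"
    using comb_auts_surj[OF assms(1)] by blast
  then have "P \<subseteq> \<tau> P"
    using comb_auts_subset_iff[OF assms(1) F P] face_of_imp_subset[OF F] by simp
  then show ?thesis
    using face_of_imp_subset[OF comb_auts_face[OF assms(1) P]] by blast
qed

lemma comb_auts_singleton:
  fixes P :: "'a::euclidean_space set"
  assumes \<tau>: "\<tau> \<in> comb_auts P" and "compact P" and "convex P" and v: "v extreme_point_of P"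
  obtains u where "\<tau> {v} = {u}"
proof -
  have v_face: "{v} face_of P"
    using v by (simp add: face_of_singleton)
  then have face: "\<tau> {v} face_of P" and "\<tau> {v} \<noteq> {}"
    using comb_auts_face[OF \<tau>] comb_auts_eq_iff[OF \<tau> v_face empty_face_of]
      comb_auts_empty[OF \<tau>] by auto
  then obtain u where u: "u extreme_point_of \<tau> {v}"
    using extreme_point_exists_convex face_of_imp_compact[OF assms(3,2) face]
      face_of_imp_convex[OF face] by blast
  have "{u} face_of P"
    using face_of_trans[OF u[folded face_of_singleton] face] .
  then obtain G where G: "G face_of P" "\<tau> G = {u}"
    using comb_auts_surj[OF \<tau>] by blast
  have "G \<subseteq> {v}"
    using comb_auts_subset_iff[OF \<tau> G(1) v_face] G(2) u by (auto simp: extreme_point_of_def)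
  moreover have "G \<noteq> {}"
    using G comb_auts_empty[OF \<tau>] by auto
  ultimately have "G = {v}"
    by auto
  then show thesis
    using G(2) that by simp
qed

lemma comb_aut_group_mult_apply:
  assumes "\<sigma> \<in> comb_auts P" and "\<tau> \<in> comb_auts P" and "F face_of P"
  shows "(\<sigma> \<otimes>\<^bsub>comb_aut_group P\<^esub> \<tau>) F = \<sigma> (\<tau> F)"
  using assms
  by (simp add: comb_aut_group_def BijGroup_def compose_def faces_def comb_auts_def)

lemma comb_auts_continuous_realization:
  fixes P :: "'a::euclidean_space set"
  assumes P: "polytope P" and \<tau>: "\<tau> \<in> comb_auts P"
  obtains g where "continuous_on P g" and "\<And>F x. F face_of P \<Longrightarrow> x \<in> F \<Longrightarrow> g x \<in> \<tau> F"
proof -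
  have "\<exists>u. \<tau> {v} = {u}" if "v extreme_point_of P" for v
    using comb_auts_singleton[OF \<tau> polytope_imp_compact[OF P] polytope_imp_convex[OF P] that]
    by blast
  then obtain t where t: "\<And>v. v extreme_point_of P \<Longrightarrow> \<tau> {v} = {t v}"
    by metis
  obtain g where g: "continuous_on P g"
    and g_hull: "\<And>F x. F face_of P \<Longrightarrow> x \<in> F \<Longrightarrow>
      g x \<in> convex hull (t ` {v. v extreme_point_of F})"
    using polytope_vertex_map_extension[OF P, where t = t] by blast
  show thesis
  proof (rule that[OF g])
    fix F x assume F: "F face_of P" and "x \<in> F"
    have "convex hull (t ` {v. v extreme_point_of F}) \<subseteq> \<tau> F"
    proof (rule hull_minimal)
      show "convex (\<tau> F)"
        using comb_auts_face[OF \<tau> F] face_of_imp_convex by blast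
      show "t ` {v. v extreme_point_of F} \<subseteq> \<tau> F"
      proof clarify
        fix v assume "v extreme_point_of F"
        then have v: "v extreme_point_of P" and v_face: "{v} face_of P" and "{v} \<subseteq> F"
          using extreme_point_of_face[OF F] face_of_singleton by auto
        then have "\<tau> {v} \<subseteq> \<tau> F"
          using comb_auts_subset_iff[OF \<tau> v_face F] by simp
        then show "t v \<in> \<tau> F"
          using t[OF v] by simp
      qed
    qed
    then show "g x \<in> \<tau> F"
      using g_hull[OF F \<open>x \<in> F\<close>] by blast
  qed
qed

lemma symmetric_convex_zero_in_rel_interior:
  fixes P :: "'a::euclidean_space set"
  assumes "convex P" and "P \<noteq> {}" and "uminus ` P = P"
  shows "0 \<in> rel_interior P"
proof -
  obtain x where x: "x \<in> rel_interior P"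
    using assms rel_interior_eq_empty by blast
  have "rel_interior (uminus ` P) = uminus ` rel_interior P"
    using rel_interior_injective_linear_image[of uminus] bounded_linear_minus[OF bounded_linear_ident]
    by (simp add: inj_on_def)
  then have "- x \<in> rel_interior P"
    using x assms(3) by auto
  then have "(1/2) *\<^sub>R x + (1/2) *\<^sub>R (- x) \<in> rel_interior P"
    using x convex_rel_interior[OF assms(1)] by (intro convexD) auto
  then show ?thesis
    by simp
qed

lemma antipodal_square_root_boundary_map:
  fixes P :: "'a::euclidean_space set"
  assumes P: "polytope P" and P0: "0 \<in> rel_interior P" and \<tau>: "\<tau> \<in> comb_auts P"
    and square: "\<And>F. F face_of P \<Longrightarrow> \<tau> (\<tau> F) = uminus ` F"
  obtains g where "continuous_on (rel_frontier P) g" and "g ` rel_frontier P \<subseteq> rel_frontier P"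
    and "\<And>x. x \<in> rel_frontier P \<Longrightarrow> g (g x) \<noteq> x"
proof -
  obtain g where g: "continuous_on P g"
    and g_face: "\<And>F x. F face_of P \<Longrightarrow> x \<in> F \<Longrightarrow> g x \<in> \<tau> F"
    using comb_auts_continuous_realization[OF P \<tau>] by blast
  have rel_frontier_P: "rel_frontier P = \<Union>{F. F face_of P \<and> F \<noteq> P}"
    using P by (simp add: rel_frontier_of_polyhedron_alt polytope_imp_polyhedron)
  have "rel_frontier P \<subseteq> P"
    using P by (simp add: rel_frontier_def polytope_imp_closed closure_closed)
  have P_face: "P face_of P"
    using P by (simp add: face_of_refl polytope_imp_convex)
  have proper: "\<tau> F \<noteq> P" if F: "F face_of P" "F \<noteq> P" for F
    using F comb_auts_eq_iff[OF \<tau> F(1) P_face] comb_auts_self[OF \<tau> polytope_imp_convex[OF P]]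
    by simp
  have g_boundary: "g x \<in> rel_frontier P" if x: "x \<in> rel_frontier P" for x
  proof -
    obtain F where F: "F face_of P" "F \<noteq> P" "x \<in> F"
      using x unfolding rel_frontier_P by blast
    have "\<tau> F \<subseteq> rel_frontier P"
      by (rule face_of_subset_rel_frontier[OF comb_auts_face[OF \<tau> F(1)] proper[OF F(1,2)]])
    with g_face[OF F(1,3)] show ?thesis
      by blast
  qed
  show thesis
  proof
    show "continuous_on (rel_frontier P) g"
      using g \<open>rel_frontier P \<subseteq> P\<close> continuous_on_subset by blast
    show "g ` rel_frontier P \<subseteq> rel_frontier P"
      using g_boundary by blast
  next
    fix x assume x: "x \<in> rel_frontier P"
    then obtain F where F: "F face_of P" "F \<noteq> P" "x \<in> F"
      unfolding rel_frontier_P by blast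
    have "g (g x) \<in> uminus ` F"
      using g_face[OF comb_auts_face[OF \<tau> F(1)] g_face[OF F(1,3)]] square[OF F(1)] by simp
    moreover have "- x \<notin> F"
    proof
      assume "- x \<in> F"
      then have "(1/2) *\<^sub>R x + (1/2) *\<^sub>R (- x) \<in> F"
        using face_of_imp_convex[OF F(1)] F(3) by (intro convexD) auto
      then have "0 \<in> rel_frontier P"
        using face_of_subset_rel_frontier[OF F(1,2)] by auto
      then show False
        using P0 by (simp add: rel_frontier_def)
    qed
    ultimately show "g (g x) \<noteq> x"
      by auto
  qed
qed

lemma antipodal_aut_not_square:
  fixes P :: "'a::euclidean_space set"
  assumes P: "polytope P" and dim: "aff_dim P = DIM('a)" and "odd DIM('a)"
    and sym: "uminus ` P = P" and \<tau>: "\<tau> \<in> comb_auts P"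
  shows "\<tau> \<otimes>\<^bsub>comb_aut_group P\<^esub> \<tau> \<noteq> antipodal_aut P"
proof
  assume "\<tau> \<otimes>\<^bsub>comb_aut_group P\<^esub> \<tau> = antipodal_aut P"
  then have square: "\<tau> (\<tau> F) = uminus ` F" if "F face_of P" for F
    using comb_aut_group_mult_apply[OF \<tau> \<tau> that] that by (simp add: antipodal_aut_def faces_def)
  have "0 \<in> rel_interior P"
    using P dim sym by (intro symmetric_convex_zero_in_rel_interior) (auto simp: polytope_imp_convex)
  then obtain g where "continuous_on (rel_frontier P) g" "g ` rel_frontier P \<subseteq> rel_frontier P"
    and no_period_two: "\<And>x. x \<in> rel_frontier P \<Longrightarrow> g (g x) \<noteq> x"
    using antipodal_square_root_boundary_map[OF P _ \<tau> square] by blast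
  moreover have "rel_frontier P homeomorphic sphere (0::'a) 1"
    using homeomorphic_rel_frontiers_convex_bounded_sets[of P "cball (0::'a) 1"] P dim
    by (simp add: polytope_imp_convex polytope_imp_bounded aff_dim_cball rel_frontier_cball)
  ultimately obtain x where "x \<in> rel_frontier P" and "g (g x) = x"
    using homeomorphic_sphere_square_fixpoint[of "rel_frontier P" g] \<open>odd DIM('a)\<close> by auto
  with no_period_two show False
    by blast
qed

theorem theorem5:
  fixes m :: nat
  assumes "m \<ge> 1"
  shows "\<not> (\<exists>(P :: (real^3) set) h.
            polytope P \<and> aff_dim P = 3 \<and> uminus ` P = P \<and>
            h \<in> iso (integer_mod_group (4 * m)) (comb_aut_group P) \<and>
            h (int (2 * m)) = antipodal_aut P)"
proof
  assume "\<exists>(P :: (real^3) set) h.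
            polytope P \<and> aff_dim P = 3 \<and> uminus ` P = P \<and>
            h \<in> iso (integer_mod_group (4 * m)) (comb_aut_group P) \<and>
            h (int (2 * m)) = antipodal_aut P"
  then obtain P :: "(real^3) set" and h where P: "polytope P" and dim: "aff_dim P = 3"
    and sym: "uminus ` P = P" and h: "h \<in> hom (integer_mod_group (4 * m)) (comb_aut_group P)"
    and h_half: "h (int (2 * m)) = antipodal_aut P"
    by (auto simp: iso_def)
  have m: "int m \<in> carrier (integer_mod_group (4 * m))"
    using assms by (simp add: carrier_integer_mod_group)
  then have "h (int m) \<in> comb_auts P"
    using hom_in_carrier[OF h] by (simp add: comb_aut_group_def)
  moreover have "h (int m) \<otimes>\<^bsub>comb_aut_group P\<^esub> h (int m) = antipodal_aut P"
    using hom_mult[OF h m m] h_half assms by simp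
  ultimately show False
    using antipodal_aut_not_square[OF P _ _ sym] dim by simp
qed

end
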